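(* Let $\mathfrak F_3$ be the free group on $\{x,y,z\}$. Define the map $\Phi$ on vertices of the Farey tree $\mathrm{F}\mathbb T$ by $\Phi(r,t,s)=(\omega_r,\omega_t,\omega_s)\in\mathfrak F_3^3$ (each $\omega$ regarded as an element of $\mathfrak F_3$). Then $\Phi$ is an isomorphism of rooted planar binary trees from $\mathrm{F}\mathbb T$ onto the word tree $\mathrm{W}\mathbb T$; that is, $\Phi$ sends the root to the root and sends the left (resp. right) child of each vertex to the left (resp. right) child of its image. Equivalently, for every vertex $(r,t,s)$ of $\mathrm{F}\mathbb T$, the vertex of $\mathrm{W}\mathbb T$ at the same position (reached from the root by the same sequence of left/right moves) is $(\omega_r,\omega_t,\omega_s)$.
   Context: Farey tree $\mathrm{F}\mathbb T$: rooted planar binary tree with root $(\frac01,\frac11,\frac10)$, and each vertex $(\frac ab,\frac cd,\frac ef)$ has left child $(\frac ab,\frac{a+c}{b+d},\frac cd)$ and right child $(\frac cd,\frac{c+e}{d+f},\frac ef)$; here $\frac10$ represents $\infty$. Every positive rational occurs exactly once as a middle entry. Word tree $\mathrm{W}\mathbb T$: rooted planar binary tree with vertices in $\mathfrak F_3^3$, root $(x,y,z)$, and a vertex $(a,b,c)$ has left child $(a,bcb^{-1},b)$ and right child $(b,b^{-1}ab,c)$. Modified lattice: the planar graph with vertex set $\mathbb Z^2$ whose edges are the horizontal unit segments $[(i,j),(i+1,j)]$, the vertical unit segments $[(i,j),(i,j+1)]$, and the diagonal segments of slope $-1$ joining $(i,j+1)$ and $(i+1,j)$. Words $\omega_t$: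 set $\omega_{0/1}=x$, $\omega_{1/0}=z$. For a reduced fraction $t=p/q\in(0,\infty)$, let $L_t$ be the segment from $(0,0)$ to $(q,p)$, oriented from $(0,0)$ to $(q,p)$. List the edges of the modified lattice whose relative interior meets $L_t$, in the order of the intersection points along $L_t$. A horizontal (resp. diagonal, vertical) edge contributes the letter $x$ (resp. $y$, $z$) if the midpoint of the edge is not on the right-hand side of the oriented segment $L_t$ (including the case that the midpoint lies on $L_t$), and contributes $x^{-1}$ (resp. $y^{-1}$, $z^{-1}$) if the midpoint is on the right-hand side. The word $\omega_t$ is the concatenation of these letters in order. *)

theory Defs
  imports Complex_Main
begin

datatype gen = GX | GY | GZ

text \<open>A letter is a generator with a flag; the flag True means the inverse generator.\<close>
type_synonym letter = "gen \<times> bool"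
type_synonym word = "letter list"

definition inv_letter :: "letter \<Rightarrow> letter" where
  "inv_letter l = (fst l, \<not> snd l)"

text \<open>Free reduction: the unique freely reduced word equivalent to a word.
  Elements of F_3 are represented by freely reduced words.\<close>
fun reduce :: "word \<Rightarrow> word" where
  "reduce [] = []"
| "reduce (a # w) =
     (case reduce w of
        [] \<Rightarrow> [a]
      | b # w' \<Rightarrow> (if b = inv_letter a then w' else a # b # w'))"

definition fg_mult :: "word \<Rightarrow> word \<Rightarrow> word" where
  "fg_mult u v = reduce (u @ v)"

definition fg_inv :: "word \<Rightarrow> word" where
  "fg_inv u = rev (map inv_letter u)"

abbreviation gx :: word where "gx \<equiv> [(GX, False)]"
abbreviation gy :: word where "gy \<equiv> [(GY, False)]"
abbreviation gz :: word where "gz \<equiv> [(GZ, False)]"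

section \<open>Trees, vertices indexed by paths from the root (False = left, True = right)\<close>

text \<open>Farey tree: fractions a/b as pairs (a,b) of naturals; (1,0) stands for infinity.\<close>
type_synonym frac = "nat \<times> nat"

definition mediant :: "frac \<Rightarrow> frac \<Rightarrow> frac" where
  "mediant r s = (fst r + fst s, snd r + snd s)"

definition farey_child :: "frac \<times> frac \<times> frac \<Rightarrow> bool \<Rightarrow> frac \<times> frac \<times> frac" where
  "farey_child v d = (case v of (r, t, s) \<Rightarrow>
     (if d then (t, mediant t s, s) else (r, mediant r t, t)))"

definition farey_root :: "frac \<times> frac \<times> frac" where
  "farey_root = ((0, 1), (1, 1), (1, 0))"

definition farey_vertex :: "bool list \<Rightarrow> frac \<times> frac \<times> frac" where
  "farey_vertex path = foldl farey_child farey_root path"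

definition word_child :: "word \<times> word \<times> word \<Rightarrow> bool \<Rightarrow> word \<times> word \<times> word" where
  "word_child v d = (case v of (a, b, c) \<Rightarrow>
     (if d then (b, fg_mult (fg_inv b) (fg_mult a b), c)
           else (a, fg_mult b (fg_mult c (fg_inv b)), b)))"

definition word_root :: "word \<times> word \<times> word" where
  "word_root = (gx, gy, gz)"

definition word_vertex :: "bool list \<Rightarrow> word \<times> word \<times> word" where
  "word_vertex path = foldl word_child word_root path"

text \<open>Hor i j = [(i,j),(i+1,j)], Ver i j = [(i,j),(i,j+1)], Dia i j = [(i,j+1),(i+1,j)].\<close>
datatype edge = Hor int int | Ver int int | Dia int int

fun edge_start :: "edge \<Rightarrow> real \<times> real" where
  "edge_start (Hor i j) = (of_int i, of_int j)"
| "edge_start (Ver i j) = (of_int i, of_int j)"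
| "edge_start (Dia i j) = (of_int i, of_int j + 1)"

fun edge_end :: "edge \<Rightarrow> real \<times> real" where
  "edge_end (Hor i j) = (of_int i + 1, of_int j)"
| "edge_end (Ver i j) = (of_int i, of_int j + 1)"
| "edge_end (Dia i j) = (of_int i + 1, of_int j)"

fun edge_gen :: "edge \<Rightarrow> gen" where
  "edge_gen (Hor i j) = GX"
| "edge_gen (Dia i j) = GY"
| "edge_gen (Ver i j) = GZ"

definition edge_pt :: "edge \<Rightarrow> real \<Rightarrow> real \<times> real" where
  "edge_pt e u = ((1 - u) * fst (edge_start e) + u * fst (edge_end e),
                  (1 - u) * snd (edge_start e) + u * snd (edge_end e))"

text \<open>Point of L_t (from (0,0) to (q,p)) with parameter s in [0,1].\<close>
definition seg_pt :: "int \<Rightarrow> int \<Rightarrow> real \<Rightarrow> real \<times> real" where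
  "seg_pt p q s = (s * of_int q, s * of_int p)"

definition hits_at :: "int \<Rightarrow> int \<Rightarrow> edge \<Rightarrow> real \<Rightarrow> bool" where
  "hits_at p q e s \<longleftrightarrow> 0 \<le> s \<and> s \<le> 1 \<and> (\<exists>u. 0 < u \<and> u < 1 \<and> edge_pt e u = seg_pt p q s)"

definition crossing_edges :: "int \<Rightarrow> int \<Rightarrow> edge set" where
  "crossing_edges p q = {e. \<exists>s. hits_at p q e s}"

definition cross_param :: "int \<Rightarrow> int \<Rightarrow> edge \<Rightarrow> real" where
  "cross_param p q e = (THE s. hits_at p q e s)"

definition crossing_list :: "int \<Rightarrow> int \<Rightarrow> edge list" where
  "crossing_list p q = (THE es. set es = crossing_edges p q \<and>
       sorted_wrt (\<lambda>e e'. cross_param p q e < cross_param p q e') es)"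

definition edge_mid :: "edge \<Rightarrow> real \<times> real" where
  "edge_mid e = edge_pt e (1/2)"

definition right_side :: "int \<Rightarrow> int \<Rightarrow> real \<times> real \<Rightarrow> bool" where
  "right_side p q m \<longleftrightarrow> of_int q * snd m - of_int p * fst m < 0"

definition edge_letter :: "int \<Rightarrow> int \<Rightarrow> edge \<Rightarrow> letter" where
  "edge_letter p q e = (edge_gen e, right_side p q (edge_mid e))"

definition omega_rat :: "rat \<Rightarrow> word" where
  "omega_rat t = (case quotient_of t of (p, q) \<Rightarrow> map (edge_letter p q) (crossing_list p q))"

definition omega_frac :: "frac \<Rightarrow> word" where
  "omega_frac r = (if snd r = 0 then gz
                   else if fst r = 0 then gx
                   else omega_rat (Fract (int (fst r)) (int (snd r))))"

definition Phi :: "frac \<times> frac \<times> frac \<Rightarrow> word \<times> word \<times> word" where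
  "Phi v = (case v of (r, t, s) \<Rightarrow>
     (reduce (omega_frac r), reduce (omega_frac t), reduce (omega_frac s)))"

end

(*
  Both trees are generated from their roots by two maps, and Phi intertwines them. In the Farey
  tree, the subtree below the left (right) child of the root is the image of the whole tree under
  (a, b) |-> (a, a + b) (resp. (a + b, b)). In the word tree, the left (right) child of a vertex
  (f x, f y, f z), f an endomorphism of the free group, is (f (L x), f (L y), f (L z)) for the
  substitution L: x |-> x, y |-> y z y^-1, z |-> y (resp. R: x |-> y, y |-> y^-1 x y, z |-> z).
  So it suffices to show that omega_{p/(p+q)} = L omega_{p/q} and omega_{(p+q)/q} = R omega_{p/q}
  in the free group, for coprime p, q > 0.

  For the first identity, the antidiagonals X + Y = k cut the segment from (0,0) to (q,p) into
  blocks, each crossing one diagonal edge and at most one further edge, and the vertical lines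
  X = k cut the segment to (p + q, p) into blocks, whose edges are determined by the same row
  indices floor (k p / (p + q)). Block by block, the second word is the L-image of the first up to
  conjugation by y, and the conjugations telescope. The second identity follows from the first by
  the symmetry (X, Y) |-> (p - Y, q - X) of the lattice, which reverses omega and exchanges x and z.
*)

theory Submission
  imports Defs
begin

section \<open>Free reduction\<close>

definition red_cons :: "letter \<Rightarrow> word \<Rightarrow> word" where
  "red_cons a w = (case w of [] \<Rightarrow> [a] | b # w' \<Rightarrow> (if b = inv_letter a then w' else a # b # w'))"

lemma reduce_Cons: "reduce (a # w) = red_cons a (reduce w)"
  by (simp add: red_cons_def)

declare reduce.simps(2) [simp del]

abbreviation reduced :: "word \<Rightarrow> bool" where
  "reduced \<equiv> successively (\<lambda>a b. b \<noteq> inv_letter a)"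

lemma inv_letter_inv [simp]: "inv_letter (inv_letter a) = a"
  by (simp add: inv_letter_def)

lemma inv_letter_eq_commute: "b = inv_letter a \<longleftrightarrow> a = inv_letter b"
  by (auto simp: inv_letter_def)

lemma reduced_red_cons: "reduced w \<Longrightarrow> reduced (red_cons a w)"
  by (cases w) (auto simp: red_cons_def inv_letter_eq_commute successively_Cons)

lemma reduced_reduce: "reduced (reduce w)"
  by (induction w) (auto simp: reduce_Cons reduced_red_cons)

lemma reduce_reduced: "reduced w \<Longrightarrow> reduce w = w"
proof (induction w)
  case (Cons a w)
  then show ?case
    by (cases w) (auto simp: reduce_Cons red_cons_def inv_letter_eq_commute successively_Cons)
qed simp

lemma reduce_idem [simp]: "reduce (reduce w) = reduce w"
  by (simp add: reduce_reduced reduced_reduce)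

lemma red_cons_cancel:
  assumes "reduced w"
  shows "red_cons a (red_cons (inv_letter a) w) = w"
proof (cases w)
  case (Cons b v)
  with assms show ?thesis
    by (cases v) (auto simp: red_cons_def inv_letter_def)
qed (simp add: red_cons_def)

lemma reduce_append_right: "reduce (u @ reduce v) = reduce (u @ v)"
  by (induction u) (simp_all add: reduce_Cons)

lemma reduce_red_cons_append: "reduce (red_cons a w @ v) = red_cons a (reduce (w @ v))"
proof (cases w)
  case (Cons b w')
  show ?thesis
  proof (cases "b = inv_letter a")
    case True
    then have "red_cons a (reduce (w @ v)) = red_cons a (red_cons (inv_letter a) (reduce (w' @ v)))"
      using Cons by (simp add: reduce_Cons)
    also have "\<dots> = reduce (w' @ v)"
      by (simp add: red_cons_cancel reduced_reduce)
    finally show ?thesis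
      using Cons True by (simp add: red_cons_def)
  qed (use Cons in \<open>simp add: red_cons_def reduce_Cons\<close>)
qed (simp add: red_cons_def reduce_Cons)

lemma reduce_append_left: "reduce (reduce u @ v) = reduce (u @ v)"
  by (induction u) (simp_all add: reduce_Cons reduce_red_cons_append)

lemma reduce_append_cong:
  "reduce u = reduce u' \<Longrightarrow> reduce v = reduce v' \<Longrightarrow> reduce (u @ v) = reduce (u' @ v')"
  by (metis reduce_append_left reduce_append_right)

lemma reduce_cancel_pair: "reduce (u @ a # inv_letter a # v) = reduce (u @ v)"
proof -
  have "reduce (a # inv_letter a # v) = reduce v"
    by (simp add: reduce_Cons red_cons_cancel reduced_reduce)
  then show ?thesis
    by (metis reduce_append_right)
qed

lemma reduced_rev [simp]: "reduced (rev w) \<longleftrightarrow> reduced w"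
  unfolding successively_rev by (rule successively_cong) (auto simp: inv_letter_def)

lemma reduce_rev: "reduce (rev w) = rev (reduce w)"
proof (induction w)
  case (Cons a w)
  have "reduce (rev (a # w)) = reduce (rev (reduce w) @ [a])"
    using reduce_append_left[of "rev w" "[a]"] by (simp add: Cons.IH)
  also have "\<dots> = rev (red_cons a (reduce w))"
  proof (cases "reduce w")
    case (Cons b v)
    have "reduced (b # v)"
      using Cons reduced_reduce by metis
    then have "reduced (rev (a # b # v))" if "b \<noteq> inv_letter a"
      using that by (simp only: reduced_rev) simp
    moreover have "reduced (rev v)"
      using \<open>reduced (b # v)\<close> by (auto simp: successively_Cons simp del: successively_rev)
    ultimately show ?thesis
      using Cons reduce_cancel_pair[of "rev v" "inv_letter a" "[]"]
      by (auto simp: red_cons_def reduce_reduced)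
  qed (simp add: red_cons_def reduce_Cons)
  finally show ?case
    by (simp add: reduce_Cons)
qed simp

lemma reduce_map:
  assumes "inj f" and f_inv: "\<And>a. f (inv_letter a) = inv_letter (f a)"
  shows "reduce (map f w) = map f (reduce w)"
proof (induction w)
  case (Cons a w)
  have "f b = inv_letter (f a) \<longleftrightarrow> b = inv_letter a" for b
    using \<open>inj f\<close> by (metis f_inv injD)
  with Cons show ?case
    by (cases "reduce w") (auto simp: reduce_Cons red_cons_def)
qed simp

lemma inj_inv_letter: "inj inv_letter"
  by (metis injI inv_letter_inv)

lemma reduce_fg_inv: "reduce (fg_inv w) = fg_inv (reduce w)"
  by (simp add: fg_inv_def reduce_rev reduce_map inj_inv_letter)

lemma reduce_cancel_fg_inv: "reduce (u @ fg_inv u @ v) = reduce v"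
proof (induction u arbitrary: v)
  case (Cons a u)
  have "reduce ((a # u) @ fg_inv (a # u) @ v) = reduce ([a] @ u @ fg_inv u @ inv_letter a # v)"
    by (simp add: fg_inv_def)
  also have "\<dots> = reduce (a # inv_letter a # v)"
    by (metis Cons.IH append_Cons append_Nil reduce_append_right)
  also have "\<dots> = reduce v"
    using reduce_cancel_pair[of "[]"] by simp
  finally show ?case .
qed (simp add: fg_inv_def)

lemma fg_inv_fg_inv [simp]: "fg_inv (fg_inv u) = u"
  by (simp add: fg_inv_def rev_map comp_def)

lemma fg_mult_reduce: "fg_mult (reduce u) (reduce v) = reduce (u @ v)"
  by (simp add: fg_mult_def reduce_append_left reduce_append_right)

lemma reduce_concat_cong:
  assumes "\<And>k. k \<in> set ks \<Longrightarrow> reduce (f k) = reduce (g k)"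
  shows "reduce (concat (map f ks)) = reduce (concat (map g ks))"
  using assms by (induction ks) (auto intro: reduce_append_cong)

lemma reduce_concat_conj:
  "reduce (concat (map (\<lambda>k. u @ f k @ fg_inv u) ks)) = reduce (u @ concat (map f ks) @ fg_inv u)"
proof (induction ks)
  case Nil
  show ?case
    using reduce_cancel_fg_inv[of u "[]"] by simp
next
  case (Cons k ks)
  have "reduce (concat (map (\<lambda>k. u @ f k @ fg_inv u) (k # ks)))
      = reduce ((u @ f k) @ fg_inv u @ u @ concat (map f ks) @ fg_inv u)"
    using reduce_append_cong[OF refl Cons.IH, of "u @ f k @ fg_inv u"] by simp
  also have "\<dots> = reduce ((u @ f k) @ concat (map f ks) @ fg_inv u)"
    using reduce_cancel_fg_inv[of "fg_inv u"] by (metis reduce_append_right fg_inv_fg_inv)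
  finally show ?case
    by simp
qed

definition subst :: "(letter \<Rightarrow> word) \<Rightarrow> word \<Rightarrow> word" where
  "subst f w = concat (map f w)"

lemma subst_simps [simp]:
  "subst f [] = []"
  "subst f (a # w) = f a @ subst f w"
  "subst f (u @ v) = subst f u @ subst f v"
  by (simp_all add: subst_def)

lemma subst_concat: "subst f (concat ws) = concat (map (subst f) ws)"
  by (induction ws) simp_all

definition inverse_compatible :: "(letter \<Rightarrow> word) \<Rightarrow> bool" where
  "inverse_compatible f \<longleftrightarrow> (\<forall>a. f (inv_letter a) = fg_inv (f a))"

lemma subst_fg_inv: "inverse_compatible f \<Longrightarrow> subst f (fg_inv w) = fg_inv (subst f w)"
  by (induction w) (auto simp: inverse_compatible_def fg_inv_def)

lemma reduce_subst_reduce: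
  assumes "inverse_compatible f"
  shows "reduce (subst f (reduce w)) = reduce (subst f w)"
proof (induction w)
  case (Cons a w)
  have f_inv: "f (inv_letter a) = fg_inv (f a)"
    using assms unfolding inverse_compatible_def by blast
  have "reduce (subst f (red_cons a v)) = reduce (f a @ subst f v)" for v
  proof (cases v)
    case (Cons b v')
    with f_inv show ?thesis
      by (auto simp: red_cons_def reduce_cancel_fg_inv)
  qed (simp add: red_cons_def)
  then show ?case
    by (metis Cons.IH reduce_Cons reduce_append_right subst_simps(2))
qed simp

lemma int_div_eq_iff:
  fixes x n a :: int
  assumes "0 < n"
  shows "x div n = a \<longleftrightarrow> a * n \<le> x \<and> x < (a + 1) * n"
proof
  assume "x div n = a"
  moreover have "0 \<le> x mod n" "x mod n < n" "x div n * n + x mod n = x"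
    using assms by simp_all
  ultimately show "a * n \<le> x \<and> x < (a + 1) * n"
    by (auto simp: algebra_simps)
next
  assume "a * n \<le> x \<and> x < (a + 1) * n"
  then show "x div n = a"
    using int_div_pos_eq[of x n a "x - n * a"] by (simp add: algebra_simps)
qed

lemma int_div_strict_bounds_iff:
  fixes x n a :: int
  assumes "0 < n"
  shows "a * n < x \<and> x < (a + 1) * n \<longleftrightarrow> x div n = a \<and> \<not> n dvd x"
proof -
  have "x \<noteq> k * n" if "a * n < x" "x < (a + 1) * n" for k
    using that assms by (auto simp: mult_less_cancel_right_pos)
  then show ?thesis
    using assms by (auto simp: int_div_eq_iff order_le_less dvd_def mult.commute)
qed

text \<open>The line through the origin of slope \<open>m/n\<close> passes through lattice points at the abscissae
  \<open>0\<close> and \<open>n\<close> and strictly between lattice points at the abscissae in between.\<close>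
lemma coprime_crossing_iff:
  fixes n m j a :: int
  assumes "0 < n" and "coprime n m"
  shows "0 \<le> j \<and> j \<le> n \<and> a * n < j * m \<and> j * m < (a + 1) * n \<longleftrightarrow>
    0 < j \<and> j < n \<and> a = j * m div n"
proof -
  have "n dvd j * m \<longleftrightarrow> n dvd j"
    using assms(2) by (simp add: coprime_dvd_mult_left_iff)
  moreover have "0 \<le> j \<Longrightarrow> j \<le> n \<Longrightarrow> n dvd j \<longleftrightarrow> j = 0 \<or> j = n"
    using assms(1) zdvd_imp_le by (fastforce simp: order_le_less)
  ultimately show ?thesis
    using assms(1) by (auto simp: int_div_strict_bounds_iff)
qed

lemma of_int_divide_less_iff:
  fixes a b c d :: int
  assumes "0 < b" and "0 < d"
  shows "real_of_int a / of_int b < of_int c / of_int d \<longleftrightarrow> a * d < c * b"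
proof -
  have "a * d < c * b \<longleftrightarrow> real_of_int (a * d) < of_int (c * b)"
    by (simp only: of_int_less_iff)
  with assms show ?thesis
    by (simp add: field_simps)
qed

lemma sorted_wrt_key_unique:
  fixes f :: "'a \<Rightarrow> 'b::linorder"
  assumes "sorted_wrt (\<lambda>a b. f a < f b) xs" and "sorted_wrt (\<lambda>a b. f a < f b) ys"
    and "set xs = set ys"
  shows "xs = ys"
proof -
  have sorted: "sorted_wrt (<) (map f xs)" "sorted_wrt (<) (map f ys)"
    using assms(1,2) by (simp_all add: sorted_wrt_map)
  then have "map f xs = map f ys"
    using assms(3) by (metis set_map strict_sorted_equal)
  moreover have "inj_on f (set xs \<union> set ys)"
    using sorted(1) assms(3) by (simp add: strict_sorted_iff distinct_map)
  ultimately show ?thesis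
    by (simp add: inj_on_map_eq_map)
qed

lemma sorted_wrt_concat_blocks:
  fixes f :: "'a \<Rightarrow> 'b::linorder" and g :: "int \<Rightarrow> 'b"
  assumes "mono g" and "sorted_wrt (<) ks"
    and "\<And>k. k \<in> set ks \<Longrightarrow> sorted_wrt (\<lambda>x y. f x < f y) (B k)"
    and "\<And>k x. k \<in> set ks \<Longrightarrow> x \<in> set (B k) \<Longrightarrow> g k \<le> f x \<and> f x < g (k + 1)"
  shows "sorted_wrt (\<lambda>x y. f x < f y) (concat (map B ks))"
  using assms(2-)
proof (induction ks)
  case (Cons k ks)
  have "f x < f y" if "x \<in> set (B k)" "k' \<in> set ks" "y \<in> set (B k')" for x k' y
  proof -
    have "k + 1 \<le> k'"
      using Cons.prems(1) that(2) by auto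
    then have "f x < g k'"
      using Cons.prems(3)[of k x] that(1) monoD[OF assms(1)] by (meson order_less_le_trans list.set_intros(1))
    also have "g k' \<le> f y"
      using Cons.prems(3)[of k' y] that(2,3) by simp
    finally show ?thesis .
  qed
  with Cons show ?case
    by (auto simp: sorted_wrt_append)
qed simp

section \<open>Crossings of a segment with the modified lattice\<close>

text \<open>Integer forms of \<open>hits_at\<close>, of the parameter of the meeting point, and of \<open>right_side\<close> at
  the midpoint of an edge, for the segment from \<open>(0,0)\<close> to \<open>(q,p)\<close>. The edge \<open>Dia i j\<close> lies on the
  antidiagonal \<open>X + Y = i + j + 1\<close>.\<close>
fun crosses :: "int \<Rightarrow> int \<Rightarrow> edge \<Rightarrow> bool" where
  "crosses p q (Hor i j) \<longleftrightarrow> 0 \<le> j \<and> j \<le> p \<and> i * p < j * q \<and> j * q < (i + 1) * p"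
| "crosses p q (Ver i j) \<longleftrightarrow> 0 \<le> i \<and> i \<le> q \<and> j * q < i * p \<and> i * p < (j + 1) * q"
| "crosses p q (Dia i j) \<longleftrightarrow> 0 \<le> i + j + 1 \<and> i + j + 1 \<le> p + q \<and>
     i * (p + q) < (i + j + 1) * q \<and> (i + j + 1) * q < (i + 1) * (p + q)"

fun cross_time :: "int \<Rightarrow> int \<Rightarrow> edge \<Rightarrow> real" where
  "cross_time p q (Hor i j) = of_int j / of_int p"
| "cross_time p q (Ver i j) = of_int i / of_int q"
| "cross_time p q (Dia i j) = of_int (i + j + 1) / of_int (p + q)"

fun right_of :: "int \<Rightarrow> int \<Rightarrow> edge \<Rightarrow> bool" where
  "right_of p q (Hor i j) \<longleftrightarrow> 2 * q * j < p * (2 * i + 1)"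
| "right_of p q (Ver i j) \<longleftrightarrow> q * (2 * j + 1) < 2 * p * i"
| "right_of p q (Dia i j) \<longleftrightarrow> q * (2 * j + 1) < p * (2 * i + 1)"

lemma edge_letter_eq: "edge_letter p q e = (edge_gen e, right_of p q e)"
proof -
  have "right_side p q (edge_mid e) \<longleftrightarrow> right_of p q e"
  proof (cases e)
    case (Hor i j)
    have "right_of p q e \<longleftrightarrow> real_of_int (2 * q * j) < of_int (p * (2 * i + 1))"
      using Hor by (simp only: right_of.simps of_int_less_iff)
    with Hor show ?thesis
      by (simp add: right_side_def edge_mid_def edge_pt_def field_simps)
  next
    case (Ver i j)
    have "right_of p q e \<longleftrightarrow> real_of_int (q * (2 * j + 1)) < of_int (2 * p * i)"
      using Ver by (simp only: right_of.simps of_int_less_iff)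
    with Ver show ?thesis
      by (simp add: right_side_def edge_mid_def edge_pt_def field_simps)
  next
    case (Dia i j)
    have "right_of p q e \<longleftrightarrow> real_of_int (q * (2 * j + 1)) < of_int (p * (2 * i + 1))"
      using Dia by (simp only: right_of.simps of_int_less_iff)
    with Dia show ?thesis
      by (auto simp: right_side_def edge_mid_def edge_pt_def field_simps)
  qed
  then show ?thesis
    by (simp add: edge_letter_def)
qed

lemma unit_edge_hit_iff:
  fixes I J P Q :: int and s :: real
  assumes "0 < P"
  shows "(0 \<le> s \<and> s \<le> 1 \<and>
      (\<exists>u. 0 < u \<and> u < 1 \<and> of_int I + u = s * of_int Q \<and> of_int J = s * of_int P)) \<longleftrightarrow>
    s = of_int J / of_int P \<and> 0 \<le> J \<and> J \<le> P \<and> I * P < J * Q \<and> J * Q < (I + 1) * P"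
    (is "?hit \<longleftrightarrow> ?crossing")
proof -
  have P: "0 < real_of_int P"
    using assms by simp
  have "?hit \<longleftrightarrow> s = of_int J / of_int P \<and> 0 \<le> s \<and> s \<le> 1 \<and>
      of_int I < s * of_int Q \<and> s * of_int Q < of_int I + 1"
  proof
    assume ?hit
    then obtain u where "0 < u" "u < 1" "of_int I + u = s * of_int Q" "of_int J = s * of_int P"
      by blast
    with \<open>?hit\<close> P show "s = of_int J / of_int P \<and> 0 \<le> s \<and> s \<le> 1 \<and>
      of_int I < s * of_int Q \<and> s * of_int Q < of_int I + 1"
      by (auto simp: field_simps)
  next
    assume "s = of_int J / of_int P \<and> 0 \<le> s \<and> s \<le> 1 \<and>
      of_int I < s * of_int Q \<and> s * of_int Q < of_int I + 1"
    with P show ?hit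
      by (intro conjI exI[of _ "s * of_int Q - of_int I"]) auto
  qed
  also have "\<dots> \<longleftrightarrow> ?crossing"
  proof -
    have "I * P < J * Q \<longleftrightarrow> real_of_int I * of_int P < of_int J * of_int Q"
      "J * Q < (I + 1) * P \<longleftrightarrow> real_of_int J * of_int Q < (of_int I + 1) * of_int P"
      by (simp_all only: of_int_less_iff[symmetric, where 'a=real]) simp_all
    with P have "real_of_int I < of_int J / of_int P * of_int Q \<longleftrightarrow> I * P < J * Q"
      "real_of_int J / of_int P * of_int Q < of_int I + 1 \<longleftrightarrow> J * Q < (I + 1) * P"
      by (simp_all add: field_simps)
    moreover have "0 \<le> real_of_int J / of_int P \<longleftrightarrow> 0 \<le> J" "real_of_int J / of_int P \<le> 1 \<longleftrightarrow> J \<le> P"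
      using P by (simp_all add: zero_le_divide_iff)
    ultimately show ?thesis
      by auto
  qed
  finally show ?thesis .
qed

lemma hits_at_iff:
  assumes "0 < p" and "0 < q"
  shows "hits_at p q e s \<longleftrightarrow> crosses p q e \<and> s = cross_time p q e"
proof (cases e)
  case (Hor i j)
  then have "hits_at p q e s \<longleftrightarrow> 0 \<le> s \<and> s \<le> 1 \<and>
      (\<exists>u. 0 < u \<and> u < 1 \<and> of_int i + u = s * of_int q \<and> of_int j = s * of_int p)"
    by (simp add: hits_at_def edge_pt_def seg_pt_def algebra_simps)
  with Hor show ?thesis
    using unit_edge_hit_iff[where P = p and I = i and J = j and Q = q] assms by auto
next
  case (Ver i j)
  then have "hits_at p q e s \<longleftrightarrow> 0 \<le> s \<and> s \<le> 1 \<and>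
      (\<exists>u. 0 < u \<and> u < 1 \<and> of_int j + u = s * of_int p \<and> of_int i = s * of_int q)"
    by (auto simp: hits_at_def edge_pt_def seg_pt_def algebra_simps)
  with Ver show ?thesis
    using unit_edge_hit_iff[where P = q and I = j and J = i and Q = p] assms by auto
next
  case (Dia i j)
  then have "hits_at p q e s \<longleftrightarrow> 0 \<le> s \<and> s \<le> 1 \<and> (\<exists>u. 0 < u \<and> u < 1 \<and>
      of_int i + u = s * of_int q \<and> of_int (i + j + 1) = s * of_int (p + q))"
    by (auto simp: hits_at_def edge_pt_def seg_pt_def algebra_simps)
  with Dia show ?thesis
    using unit_edge_hit_iff[where P = "p + q" and I = i and J = "i + j + 1" and Q = q] assms by auto
qed

lemma crossing_list_eqI:
  assumes "0 < p" and "0 < q" and "set L = {e. crosses p q e}"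
    and "sorted_wrt (\<lambda>e e'. cross_time p q e < cross_time p q e') L"
  shows "crossing_list p q = L"
proof -
  have crossing_edges: "crossing_edges p q = {e. crosses p q e}"
    using assms(1,2) by (auto simp: crossing_edges_def hits_at_iff)
  have cross_param: "cross_param p q e = cross_time p q e" if "crosses p q e" for e
    unfolding cross_param_def using that assms(1,2) by (auto simp: hits_at_iff)
  have "sorted_wrt (\<lambda>e e'. cross_param p q e < cross_param p q e') L' \<longleftrightarrow>
      sorted_wrt (\<lambda>e e'. cross_time p q e < cross_time p q e') L'"
    if "set L' = {e. crosses p q e}" for L'
  proof -
    have "map (cross_param p q) L' = map (cross_time p q) L'"
      using that by (simp add: cross_param)
    then show ?thesis
      by (metis sorted_wrt_map)
  qed
  with assms(3,4) show ?thesis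
    unfolding crossing_list_def crossing_edges
    by (intro the_equality) (auto intro: sorted_wrt_key_unique)
qed

lemma crosses_Hor_iff:
  assumes "0 < p" and "coprime p q"
  shows "crosses p q (Hor i j) \<longleftrightarrow> 0 < j \<and> j < p \<and> i = j * q div p"
  using coprime_crossing_iff[OF assms, of j i] by auto

lemma crosses_Ver_iff:
  assumes "0 < q" and "coprime p q"
  shows "crosses p q (Ver i j) \<longleftrightarrow> 0 < i \<and> i < q \<and> j = i * p div q"
  using coprime_crossing_iff[OF assms(1), of p i j] assms(2) by (auto simp: coprime_commute)

lemma crosses_Dia_iff:
  assumes "0 < p + q" and "coprime p q"
  shows "crosses p q (Dia i j) \<longleftrightarrow>
    0 < i + j + 1 \<and> i + j + 1 < p + q \<and> i = (i + j + 1) * q div (p + q)"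
proof -
  have "coprime (p + q) q"
    using assms(2) by (simp add: coprime_iff_gcd_eq_1)
  then show ?thesis
    using coprime_crossing_iff[OF assms(1), of q "i + j + 1" i] by auto
qed

definition omega_word :: "int \<Rightarrow> int \<Rightarrow> word" where
  "omega_word p q = map (edge_letter p q) (crossing_list p q)"

text \<open>The action of \<open>(X, Y) \<mapsto> (p - Y, q - X)\<close>, which maps the segment from \<open>(0,0)\<close> to \<open>(q,p)\<close>
  onto the segment from \<open>(p,q)\<close> to \<open>(0,0)\<close>.\<close>
fun reflect_edge :: "int \<Rightarrow> int \<Rightarrow> edge \<Rightarrow> edge" where
  "reflect_edge p q (Hor i j) = Ver (p - j) (q - i - 1)"
| "reflect_edge p q (Ver i j) = Hor (p - j - 1) (q - i)"
| "reflect_edge p q (Dia i j) = Dia (p - j - 1) (q - i - 1)"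

lemma reflect_edge_reflect_edge [simp]: "reflect_edge q p (reflect_edge p q e) = e"
  by (cases e) auto

lemma crosses_reflect_edge: "crosses q p (reflect_edge p q e) \<longleftrightarrow> crosses p q e"
  by (cases e) (auto simp: algebra_simps)

lemma cross_time_reflect_edge:
  "0 < p \<Longrightarrow> 0 < q \<Longrightarrow> cross_time q p (reflect_edge p q e) = 1 - cross_time p q e"
  by (cases e) (simp_all add: field_simps)

fun swap_xz :: "letter \<Rightarrow> letter" where
  "swap_xz (GX, s) = (GZ, s)"
| "swap_xz (GY, s) = (GY, s)"
| "swap_xz (GZ, s) = (GX, s)"

lemma swap_xz_swap_xz [simp]: "swap_xz (swap_xz a) = a"
  by (cases a rule: swap_xz.cases) auto

lemma inj_swap_xz: "inj swap_xz"
  by (metis injI swap_xz_swap_xz)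

lemma swap_xz_inv_letter: "swap_xz (inv_letter a) = inv_letter (swap_xz a)"
  by (cases a rule: swap_xz.cases) (auto simp: inv_letter_def)

lemma edge_letter_reflect_edge: "edge_letter q p (reflect_edge p q e) = swap_xz (edge_letter p q e)"
  by (cases e) (auto simp: edge_letter_eq algebra_simps)

section \<open>The crossing list of a coprime pair\<close>

locale coprime_pair =
  fixes p q :: int
  assumes p_pos: "0 < p" and q_pos: "0 < q" and coprime: "coprime p q"

begin

lemma sum_pos: "0 < p + q"
  using p_pos q_pos by simp

text \<open>For \<open>0 < k < p + q\<close>, the segment from \<open>(0,0)\<close> to \<open>(q,p)\<close> meets the antidiagonal
  \<open>X + Y = k\<close> in the unit square with lower left corner \<open>(col k, row k)\<close>.\<close>
definition col :: "int \<Rightarrow> int" where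
  "col k = k * q div (p + q)"

definition row :: "int \<Rightarrow> int" where
  "row k = k * p div (p + q)"

lemma col_bounds: "col k * (p + q) \<le> k * q" "k * q < (col k + 1) * (p + q)"
  using int_div_eq_iff[OF sum_pos, of "k * q" "col k"] by (simp_all add: col_def)

lemma col_less:
  assumes "0 < k" and "k < p + q"
  shows "col k * (p + q) < k * q"
proof -
  have "coprime (p + q) q"
    using coprime by (simp add: coprime_iff_gcd_eq_1)
  then show ?thesis
    using coprime_crossing_iff[OF sum_pos, of q k "col k"] assms by (simp add: col_def)
qed

lemma col_range:
  assumes "0 < k" and "k < p + q"
  shows "0 \<le> col k" and "col k < q"
proof -
  show "0 \<le> col k"
    using assms sum_pos q_pos by (simp add: col_def pos_imp_zdiv_nonneg_iff)
  have "k * q < q * (p + q)"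
    using assms q_pos by (simp add: mult.commute)
  then have "col k * (p + q) < q * (p + q)"
    using col_less[OF assms] by linarith
  then show "col k < q"
    using sum_pos by (simp add: mult_less_cancel_right_pos)
qed

lemma col_step: "col k \<le> col (k + 1)" "col (k + 1) \<le> col k + 1"
proof -
  have "col k * (p + q) < (col (k + 1) + 1) * (p + q)"
    using col_bounds[of k] col_bounds[of "k + 1"] q_pos by (simp add: algebra_simps)
  then show "col k \<le> col (k + 1)"
    using sum_pos by (simp add: mult_less_cancel_right_pos)
  have "col (k + 1) * (p + q) < (col k + 2) * (p + q)"
    using col_bounds[of k] col_bounds[of "k + 1"] p_pos by (simp add: algebra_simps)
  then show "col (k + 1) \<le> col k + 1"
    using sum_pos by (simp add: mult_less_cancel_right_pos)
qed

end

sublocale coprime_pair \<subseteq> swap: coprime_pair q p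
  using p_pos q_pos coprime by unfold_locales (simp_all add: coprime_commute)

context coprime_pair
begin

lemma row_eq_swap_col: "row k = swap.col k"
  by (simp add: row_def swap.col_def add.commute)

lemma row_bounds: "row k * (p + q) \<le> k * p" "k * p < (row k + 1) * (p + q)"
  using swap.col_bounds[of k] by (simp_all add: row_eq_swap_col add.commute)

lemma row_less: "0 < k \<Longrightarrow> k < p + q \<Longrightarrow> row k * (p + q) < k * p"
  using swap.col_less[of k] by (simp add: row_eq_swap_col add.commute)

lemma row_range: "0 < k \<Longrightarrow> k < p + q \<Longrightarrow> 0 \<le> row k \<and> row k < p"
  using swap.col_range[of k] by (simp add: row_eq_swap_col add.commute)

lemma row_step: "row k \<le> row (k + 1)" "row (k + 1) \<le> row k + 1"
  using swap.col_step[of k] by (simp_all add: row_eq_swap_col)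

lemma col_add_row:
  assumes "0 < k" and "k < p + q"
  shows "col k + row k = k - 1"
proof -
  have "(col k + row k) * (p + q) < k * (p + q)" "k * (p + q) < (col k + row k + 2) * (p + q)"
    using col_less[OF assms] row_less[OF assms] col_bounds[of k] row_bounds[of k]
    by (simp_all add: algebra_simps)
  then show ?thesis
    using sum_pos by (simp add: mult_less_cancel_right_pos)
qed

lemma col_row_step:
  assumes "0 < k" and "k + 1 < p + q"
  shows "col (k + 1) = col k + 1 \<and> row (k + 1) = row k \<or> col (k + 1) = col k \<and> row (k + 1) = row k + 1"
  using col_add_row[of k] col_add_row[of "k + 1"] col_step[of k] assms by auto

definition diag_edge :: "int \<Rightarrow> edge" where
  "diag_edge k = Dia (col k) (row k)"

text \<open>The edge crossed between the antidiagonals \<open>X + Y = k\<close> and \<open>X + Y = k + 1\<close>.\<close>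
definition mid_edge :: "int \<Rightarrow> edge" where
  "mid_edge k = (if col (k + 1) = col k + 1 then Ver (col (k + 1)) (row k) else Hor (col k) (row (k + 1)))"

definition diag_block :: "int \<Rightarrow> edge list" where
  "diag_block k = diag_edge k # (if k + 1 < p + q then [mid_edge k] else [])"

definition diag_list :: "edge list" where
  "diag_list = concat (map diag_block [1..p + q - 1])"

lemma crosses_diag_edge:
  assumes "0 < k" and "k < p + q"
  shows "crosses p q (diag_edge k)"
  unfolding diag_edge_def crosses_Dia_iff[OF sum_pos coprime]
  using col_add_row[OF assms] assms by (simp add: col_def)

lemma cross_time_diag_edge:
  assumes "0 < k" and "k < p + q"
  shows "cross_time p q (diag_edge k) = of_int k / of_int (p + q)"
  using col_add_row[OF assms] by (simp add: diag_edge_def)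

lemma mid_edge_col_step:
  assumes "0 < k" and "k + 1 < p + q" and "col (k + 1) = col k + 1"
  shows "crosses p q (mid_edge k)"
    and "of_int k / of_int (p + q) < cross_time p q (mid_edge k)"
    and "cross_time p q (mid_edge k) < of_int (k + 1) / of_int (p + q)"
proof -
  define c where "c = col (k + 1)"
  have row: "row k = k - c"
    using col_add_row[of "k + 1"] col_row_step[OF assms(1,2)] assms by (auto simp: c_def)
  have lower: "k * q < c * (p + q)" and upper: "c * (p + q) < (k + 1) * q"
    using col_bounds(2)[of k] col_less[of "k + 1"] assms by (simp_all add: c_def)
  have edge: "mid_edge k = Ver c (k - c)"
    using assms(3) row by (simp add: mid_edge_def c_def)
  have "0 \<le> c" "c < q"
    using col_range[of "k + 1"] assms by (simp_all add: c_def)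
  then show "crosses p q (mid_edge k)"
    using lower upper unfolding edge by (simp add: algebra_simps)
  show "of_int k / of_int (p + q) < cross_time p q (mid_edge k)"
    "cross_time p q (mid_edge k) < of_int (k + 1) / of_int (p + q)"
    unfolding edge cross_time.simps of_int_divide_less_iff[OF sum_pos q_pos]
      of_int_divide_less_iff[OF q_pos sum_pos]
    using lower upper by simp_all
qed

lemma mid_edge_row_step:
  assumes "0 < k" and "k + 1 < p + q" and "col (k + 1) \<noteq> col k + 1"
  shows "crosses p q (mid_edge k)"
    and "of_int k / of_int (p + q) < cross_time p q (mid_edge k)"
    and "cross_time p q (mid_edge k) < of_int (k + 1) / of_int (p + q)"
proof -
  define r where "r = row (k + 1)"
  have col: "col k = k - r"
    using col_add_row[of "k + 1"] col_row_step[OF assms(1,2)] assms by (auto simp: r_def)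
  have lower: "k * p < r * (p + q)" and upper: "r * (p + q) < (k + 1) * p"
    using row_bounds(2)[of k] row_less[of "k + 1"] col_row_step[OF assms(1,2)] assms
    by (auto simp: r_def)
  have edge: "mid_edge k = Hor (k - r) r"
    using assms(3) col by (simp add: mid_edge_def r_def)
  have "0 \<le> r" "r < p"
    using row_range[of "k + 1"] assms by (simp_all add: r_def)
  then show "crosses p q (mid_edge k)"
    using lower upper unfolding edge by (simp add: algebra_simps)
  show "of_int k / of_int (p + q) < cross_time p q (mid_edge k)"
    "cross_time p q (mid_edge k) < of_int (k + 1) / of_int (p + q)"
    unfolding edge cross_time.simps of_int_divide_less_iff[OF sum_pos p_pos]
      of_int_divide_less_iff[OF p_pos sum_pos]
    using lower upper by simp_all
qed

lemma crosses_mid_edge: "0 < k \<Longrightarrow> k + 1 < p + q \<Longrightarrow> crosses p q (mid_edge k)"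
  using mid_edge_col_step(1) mid_edge_row_step(1) by blast

lemma cross_time_mid_edge:
  assumes "0 < k" and "k + 1 < p + q"
  shows "of_int k / of_int (p + q) < cross_time p q (mid_edge k)"
    and "cross_time p q (mid_edge k) < of_int (k + 1) / of_int (p + q)"
  using mid_edge_col_step(2,3)[OF assms] mid_edge_row_step(2,3)[OF assms] by blast+

lemma mem_diag_list_iff:
  "e \<in> set diag_list \<longleftrightarrow>
    (\<exists>k. 0 < k \<and> k < p + q \<and> (e = diag_edge k \<or> k + 1 < p + q \<and> e = mid_edge k))"
proof -
  have "e \<in> set (diag_block k) \<longleftrightarrow> e = diag_edge k \<or> k + 1 < p + q \<and> e = mid_edge k" for k
    by (auto simp: diag_block_def)
  moreover have "k \<in> set [1..p + q - 1] \<longleftrightarrow> 0 < k \<and> k < p + q" for k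
    by auto
  ultimately show ?thesis
    unfolding diag_list_def set_concat set_map by blast
qed

lemma Dia_mem_diag_list:
  assumes "crosses p q (Dia i j)"
  shows "Dia i j \<in> set diag_list"
proof -
  define k where "k = i + j + 1"
  have k: "0 < k" "k < p + q" and "i = col k"
    using assms unfolding crosses_Dia_iff[OF sum_pos coprime] by (simp_all add: k_def col_def)
  moreover have "j = row k"
    using col_add_row[OF k] \<open>i = col k\<close> k_def by linarith
  ultimately have "Dia i j = diag_edge k"
    by (simp add: diag_edge_def)
  with k show ?thesis
    unfolding mem_diag_list_iff by blast
qed

lemma Ver_mem_diag_list:
  assumes "crosses p q (Ver i j)"
  shows "Ver i j \<in> set diag_list"
proof -
  define k where "k = i + j"
  have i: "0 < i" "i < q" and below: "j * q < i * p" and above: "i * p < (j + 1) * q"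
    using assms crosses_Ver_iff[OF q_pos coprime] by auto
  have "0 < (j + 1) * q"
    using above mult_pos_pos[of i p] i p_pos by linarith
  then have "0 \<le> j"
    using q_pos by (simp add: zero_less_mult_iff)
  have "j * q < p * q"
    using below mult_strict_right_mono[OF \<open>i < q\<close> p_pos] by (simp add: mult.commute)
  then have "j < p"
    using q_pos by (simp add: mult_less_cancel_right_pos)
  have col: "col (k + 1) = i"
    unfolding col_def int_div_eq_iff[OF sum_pos] using below above p_pos
    by (simp add: k_def algebra_simps)
  have row: "row k = j"
    unfolding row_def int_div_eq_iff[OF sum_pos] using below above p_pos q_pos
    by (simp add: k_def algebra_simps)
  have k: "0 < k" "k + 1 < p + q"
    using i \<open>0 \<le> j\<close> \<open>j < p\<close> by (simp_all add: k_def)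
  then have "col (k + 1) = col k + 1"
    using col_add_row[of k] col row by (simp add: k_def)
  then have "mid_edge k = Ver i j"
    using col row by (simp add: mid_edge_def)
  with k show ?thesis
    unfolding mem_diag_list_iff by auto
qed

lemma Hor_mem_diag_list:
  assumes "crosses p q (Hor i j)"
  shows "Hor i j \<in> set diag_list"
proof -
  define k where "k = i + j"
  have j: "0 < j" "j < p" and below: "i * p < j * q" and above: "j * q < (i + 1) * p"
    using assms crosses_Hor_iff[OF p_pos coprime] by auto
  have "0 < (i + 1) * p"
    using above mult_pos_pos[of j q] j q_pos by linarith
  then have "0 \<le> i"
    using p_pos by (simp add: zero_less_mult_iff)
  have "i * p < q * p"
    using below mult_strict_right_mono[OF \<open>j < p\<close> q_pos] by (simp add: mult.commute)
  then have "i < q"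
    using p_pos by (simp add: mult_less_cancel_right_pos)
  have col: "col k = i" "col (k + 1) = i"
    unfolding col_def int_div_eq_iff[OF sum_pos] using below above p_pos q_pos
    by (simp_all add: k_def algebra_simps)
  have k: "0 < k" "k + 1 < p + q"
    using j \<open>0 \<le> i\<close> \<open>i < q\<close> by (simp_all add: k_def)
  then have "row (k + 1) = j"
    using col_add_row[of "k + 1"] col by (simp add: k_def)
  then have "mid_edge k = Hor i j"
    using col by (simp add: mid_edge_def)
  with k show ?thesis
    unfolding mem_diag_list_iff by auto
qed

lemma set_diag_list: "set diag_list = {e. crosses p q e}"
proof (intro set_eqI iffI)
  fix e
  assume "e \<in> set diag_list"
  then show "e \<in> {e. crosses p q e}"
    unfolding mem_diag_list_iff using crosses_diag_edge crosses_mid_edge by force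
next
  fix e
  assume "e \<in> {e. crosses p q e}"
  then show "e \<in> set diag_list"
    using Dia_mem_diag_list Ver_mem_diag_list Hor_mem_diag_list by (cases e) auto
qed

lemma sorted_diag_list: "sorted_wrt (\<lambda>e e'. cross_time p q e < cross_time p q e') diag_list"
  unfolding diag_list_def
proof (rule sorted_wrt_concat_blocks)
  let ?g = "\<lambda>k. real_of_int k / of_int (p + q)"
  show "mono ?g"
    using sum_pos by (auto intro!: monoI divide_right_mono)
  fix k
  assume "k \<in> set [1..p + q - 1]"
  then have k: "0 < k" "k < p + q"
    by auto
  have "?g k < ?g (k + 1)"
    using sum_pos by (simp add: divide_strict_right_mono)
  with k show "sorted_wrt (\<lambda>e e'. cross_time p q e < cross_time p q e') (diag_block k)"
    "\<And>e. e \<in> set (diag_block k) \<Longrightarrow> ?g k \<le> cross_time p q e \<and> cross_time p q e < ?g (k + 1)"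
    using cross_time_diag_edge cross_time_mid_edge by (auto simp: diag_block_def less_imp_le)
qed simp

theorem crossing_list_eq_diag_list: "crossing_list p q = diag_list"
  using crossing_list_eqI[OF p_pos q_pos set_diag_list sorted_diag_list] .

lemma crossing_list_swap: "crossing_list q p = rev (map (reflect_edge p q) (crossing_list p q))"
proof (rule crossing_list_eqI[OF q_pos p_pos])
  have "reflect_edge p q ` {e. crosses p q e} = {e. crosses q p e}"
  proof (intro set_eqI iffI)
    fix e
    assume "e \<in> {e. crosses q p e}"
    then show "e \<in> reflect_edge p q ` {e. crosses p q e}"
      using crosses_reflect_edge[where p = q and q = p]
      by (intro image_eqI[where x = "reflect_edge q p e"]) simp_all
  qed (auto simp: crosses_reflect_edge)
  then show "set (rev (map (reflect_edge p q) (crossing_list p q))) = {e. crosses q p e}"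
    by (simp add: crossing_list_eq_diag_list set_diag_list)
  show "sorted_wrt (\<lambda>e e'. cross_time q p e < cross_time q p e') (rev (map (reflect_edge p q) (crossing_list p q)))"
    using sorted_diag_list
    by (simp add: crossing_list_eq_diag_list sorted_wrt_rev sorted_wrt_map cross_time_reflect_edge p_pos q_pos)
qed

lemma omega_word_swap: "omega_word q p = rev (map swap_xz (omega_word p q))"
  by (simp add: omega_word_def crossing_list_swap rev_map edge_letter_reflect_edge comp_def)

end

section \<open>The crossing list of the segment to \<open>(p + q, p)\<close>\<close>

context coprime_pair
begin

lemma coprime_sum: "coprime p (p + q)"
  using coprime by (simp add: coprime_iff_gcd_eq_1)

lemma row_sum: "row (p + q) = p"
  using sum_pos by (simp add: row_def)

text \<open>The crossings of the segment from \<open>(0,0)\<close> to \<open>(p + q, p)\<close> between the vertical lines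
  \<open>X = c\<close> and \<open>X = c + 1\<close>. It meets \<open>X = c\<close> in row \<open>row c\<close>, and as its slope is less than one
  it meets at most one horizontal line there.\<close>
definition col_block :: "int \<Rightarrow> edge list" where
  "col_block c = Ver c (row c) # Dia c (row c) #
     (if c + 1 < p + q \<and> row (c + 1) = row c + 1 then [Hor c (row (c + 1)), Dia c (row (c + 1))] else [])"

definition col_list :: "edge list" where
  "col_list = Dia 0 0 # concat (map col_block [1..p + q - 1])"

lemma mem_col_list_iff:
  "e \<in> set col_list \<longleftrightarrow> e = Dia 0 0 \<or> (\<exists>c. 0 < c \<and> c < p + q \<and> e \<in> set (col_block c))"
proof -
  have "c \<in> set [1..p + q - 1] \<longleftrightarrow> 0 < c \<and> c < p + q" for c
    by auto
  then show ?thesis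
    unfolding col_list_def by auto
qed

lemma crosses_col_block:
  assumes "0 < c" and "c < p + q" and "e \<in> set (col_block c)"
  shows "crosses p (p + q) e"
proof -
  have "crosses p (p + q) (Ver c (row c))"
    using row_less[OF assms(1,2)] row_bounds(2)[of c] assms(1,2) by simp
  moreover have "crosses p (p + q) (Dia c (row c))"
    using row_bounds[of c] row_range[OF assms(1,2)] assms(1,2) p_pos
    by (simp add: algebra_simps)
  moreover have "crosses p (p + q) (Hor c (row (c + 1))) \<and> crosses p (p + q) (Dia c (row (c + 1)))"
    if "c + 1 < p + q" and step: "row (c + 1) = row c + 1"
    using row_bounds(2)[of c] row_less[of "c + 1"] row_range[of "c + 1"] that assms(1,2) p_pos
    by (simp add: algebra_simps)
  ultimately show ?thesis
    using assms(3) by (auto simp: col_block_def split: if_splits)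
qed

lemma Ver_mem_col_list:
  assumes "crosses p (p + q) (Ver c j)"
  shows "Ver c j \<in> set col_list"
proof -
  have "0 < c" "c < p + q" "j = row c"
    using assms unfolding crosses_Ver_iff[OF sum_pos coprime_sum] by (simp_all add: row_def)
  then show ?thesis
    unfolding mem_col_list_iff col_block_def by auto
qed

lemma Hor_mem_col_list:
  assumes "crosses p (p + q) (Hor c j)"
  shows "Hor c j \<in> set col_list"
proof -
  have j: "0 < j" "j < p" and below: "c * p < j * (p + q)" and above: "j * (p + q) < (c + 1) * p"
    using assms crosses_Hor_iff[OF p_pos coprime_sum] by auto
  have "row c * (p + q) < j * (p + q)"
    using row_bounds(1)[of c] below by linarith
  moreover have "j * (p + q) < (row (c + 1) + 1) * (p + q)"
    using row_bounds(2)[of "c + 1"] above by linarith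
  ultimately have j_eq: "j = row c + 1" "row (c + 1) = row c + 1"
    using row_step[of c] sum_pos by (simp_all add: mult_less_cancel_right_pos)
  have "0 < c"
  proof (rule ccontr)
    assume "\<not> 0 < c"
    then have "(c + 1) * p \<le> p" and "p + q \<le> j * (p + q)"
      using mult_right_mono[of "c + 1" 1 p] mult_right_mono[of 1 j "p + q"] j p_pos sum_pos
      by simp_all
    then show False
      using above q_pos by linarith
  qed
  moreover have "c + 1 < p + q"
  proof (rule ccontr)
    assume "\<not> c + 1 < p + q"
    then have "(p + q - 1) * p \<le> c * p" and "j * (p + q) \<le> (p - 1) * (p + q)"
      using j p_pos sum_pos by (simp_all add: mult_right_mono)
    then show False
      using below q_pos by (simp add: algebra_simps)
  qed
  ultimately show ?thesis
    using j_eq unfolding mem_col_list_iff col_block_def by auto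
qed

lemma crosses_Dia_col_row:
  assumes "crosses p (p + q) (Dia c r)"
  shows "0 \<le> c" and "c < p + q" and "r = row c \<or> r = row c + 1 \<and> row (c + 1) = row c + 1"
    and "r * (p + q) < (c + 1) * p"
proof -
  have below: "c * p < (r + 1) * (p + q)" and above: "r * (p + q) < (c + 1) * p"
    and bounds: "0 \<le> c + r + 1" "c + r + 1 \<le> p + (p + q)"
    using assms by (simp_all add: algebra_simps)
  then show "r * (p + q) < (c + 1) * p"
    by simp
  show "0 \<le> c"
  proof (rule ccontr)
    assume "\<not> 0 \<le> c"
    then have "r * (p + q) < 0"
      using above mult_nonpos_nonneg[of "c + 1" p] p_pos by simp
    then show False
      using bounds \<open>\<not> 0 \<le> c\<close> sum_pos by (simp add: mult_less_0_iff)
  qed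
  show "c < p + q"
  proof (rule ccontr)
    assume "\<not> c < p + q"
    then have "(p + q) * p \<le> c * p"
      using mult_right_mono[of "p + q" c p] p_pos by simp
    then have "p * (p + q) < (r + 1) * (p + q)"
      using below by (simp only: mult.commute[of p])
    then show False
      using bounds \<open>\<not> c < p + q\<close> sum_pos by (simp add: mult_less_cancel_right_pos)
  qed
  have "row c * (p + q) < (r + 1) * (p + q)"
    using row_bounds(1)[of c] below by linarith
  moreover have "r * (p + q) < (row (c + 1) + 1) * (p + q)"
    using row_bounds(2)[of "c + 1"] above by linarith
  ultimately show "r = row c \<or> r = row c + 1 \<and> row (c + 1) = row c + 1"
    using row_step[of c] sum_pos by (auto simp: mult_less_cancel_right_pos)
qed

lemma Dia_mem_col_list:
  assumes "crosses p (p + q) (Dia c r)"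
  shows "Dia c r \<in> set col_list"
proof (cases "c = 0")
  case True
  then have "r = 0"
    using crosses_Dia_col_row(3)[OF assms] p_pos q_pos by (simp add: row_def div_pos_pos_trivial)
  with True show ?thesis
    unfolding mem_col_list_iff by simp
next
  case False
  note r = crosses_Dia_col_row(3)[OF assms]
  have "c + 1 < p + q" if "r = row c + 1"
  proof (rule ccontr)
    assume "\<not> c + 1 < p + q"
    then have last: "c + 1 = p + q"
      using crosses_Dia_col_row(2)[OF assms] by simp
    with that r row_sum have "r = p"
      by auto
    then show False
      using crosses_Dia_col_row(4)[OF assms] last by (simp add: mult.commute)
  qed
  with r have "Dia c r \<in> set (col_block c)"
    by (auto simp: col_block_def)
  moreover have "0 < c" "c < p + q"
    using False crosses_Dia_col_row(1,2)[OF assms] by simp_all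
  ultimately show ?thesis
    unfolding mem_col_list_iff by blast
qed

lemma set_col_list: "set col_list = {e. crosses p (p + q) e}"
proof (intro set_eqI iffI)
  fix e
  assume "e \<in> set col_list"
  then show "e \<in> {e. crosses p (p + q) e}"
    unfolding mem_col_list_iff using crosses_col_block p_pos q_pos by auto
next
  fix e
  assume "e \<in> {e. crosses p (p + q) e}"
  then show "e \<in> set col_list"
    using Dia_mem_col_list Ver_mem_col_list Hor_mem_col_list by (cases e) auto
qed

lemma cross_time_col_block:
  assumes "0 < c" and "c < p + q"
  shows "sorted_wrt (\<lambda>e e'. cross_time p (p + q) e < cross_time p (p + q) e') (col_block c)"
    and "e \<in> set (col_block c) \<Longrightarrow> of_int c / of_int (p + q) \<le> cross_time p (p + q) e \<and>
      cross_time p (p + q) e < of_int (c + 1) / of_int (p + q)"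
proof -
  let ?t = "cross_time p (p + q)" and ?g = "\<lambda>c. real_of_int c / of_int (p + q)"
  have M: "0 < p + (p + q)"
    using p_pos sum_pos by simp
  have "?g c < ?g (c + 1)"
    unfolding of_int_divide_less_iff[OF sum_pos sum_pos] using sum_pos by simp
  moreover have "?g c < ?t (Dia c (row c))" "?t (Dia c (row c)) < ?g (c + 1)"
    unfolding cross_time.simps of_int_divide_less_iff[OF sum_pos M] of_int_divide_less_iff[OF M sum_pos]
    using row_bounds[of c] p_pos by (simp_all add: algebra_simps)
  moreover have "?t (Dia c (row c)) < ?t (Hor c (row (c + 1)))"
      "?t (Hor c (row (c + 1))) < ?t (Dia c (row (c + 1)))"
      "?t (Dia c (row (c + 1))) < ?g (c + 1)"
    if "c + 1 < p + q" and "row (c + 1) = row c + 1"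
    unfolding cross_time.simps of_int_divide_less_iff[OF M p_pos] of_int_divide_less_iff[OF p_pos M]
      of_int_divide_less_iff[OF M sum_pos]
    using row_bounds(2)[of c] row_less[of "c + 1"] that assms by (simp_all add: algebra_simps)
  ultimately show "sorted_wrt (\<lambda>e e'. ?t e < ?t e') (col_block c)"
    "e \<in> set (col_block c) \<Longrightarrow> ?g c \<le> ?t e \<and> ?t e < ?g (c + 1)"
    by (auto simp: col_block_def)
qed

lemma sorted_col_list: "sorted_wrt (\<lambda>e e'. cross_time p (p + q) e < cross_time p (p + q) e') col_list"
proof -
  let ?t = "cross_time p (p + q)" and ?g = "\<lambda>c. real_of_int c / of_int (p + q)"
  have M: "0 < p + (p + q)"
    using p_pos sum_pos by simp
  have "mono ?g"
    using sum_pos by (auto intro!: monoI divide_right_mono)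
  then have blocks: "sorted_wrt (\<lambda>e e'. ?t e < ?t e') (concat (map col_block [1..p + q - 1]))"
  proof (rule sorted_wrt_concat_blocks)
    fix c
    assume "c \<in> set [1..p + q - 1]"
    then have c: "0 < c" "c < p + q"
      by auto
    show "sorted_wrt (\<lambda>e e'. ?t e < ?t e') (col_block c)"
      using cross_time_col_block(1)[OF c] .
    show "\<And>e. e \<in> set (col_block c) \<Longrightarrow> ?g c \<le> ?t e \<and> ?t e < ?g (c + 1)"
      using cross_time_col_block(2)[OF c] .
  qed simp
  have "?t (Dia 0 0) < ?g 1"
    unfolding cross_time.simps of_int_divide_less_iff[OF M sum_pos] using p_pos by simp
  moreover have "?g 1 \<le> ?t e" if e: "e \<in> set (concat (map col_block [1..p + q - 1]))" for e
  proof -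
    obtain c where "1 \<le> c" "c < p + q" "e \<in> set (col_block c)"
      using e by auto
    then have "?g 1 \<le> ?g c" and "?g c \<le> ?t e"
      using monoD[OF \<open>mono ?g\<close>, of 1 c] cross_time_col_block(2)[of c e] by simp_all
    then show ?thesis
      by (rule order_trans)
  qed
  ultimately have "\<forall>e \<in> set (concat (map col_block [1..p + q - 1])). ?t (Dia 0 0) < ?t e"
    using order_less_le_trans by blast
  with blocks show ?thesis
    by (simp add: col_list_def)
qed

theorem crossing_list_eq_col_list: "crossing_list p (p + q) = col_list"
  using crossing_list_eqI[OF p_pos sum_pos set_col_list sorted_col_list] .

end

section \<open>The substitution identities\<close>

fun left_subst :: "letter \<Rightarrow> word" where
  "left_subst (GX, s) = [(GX, s)]"
| "left_subst (GY, s) = [(GY, False), (GZ, s), (GY, True)]"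
| "left_subst (GZ, s) = [(GY, s)]"

fun right_subst :: "letter \<Rightarrow> word" where
  "right_subst (GX, s) = [(GY, s)]"
| "right_subst (GY, s) = [(GY, True), (GX, s), (GY, False)]"
| "right_subst (GZ, s) = [(GZ, s)]"

lemma inverse_compatible_left_subst: "inverse_compatible left_subst"
  unfolding inverse_compatible_def
proof
  fix a :: letter
  show "left_subst (inv_letter a) = fg_inv (left_subst a)"
    by (cases a rule: left_subst.cases) (simp_all add: inv_letter_def fg_inv_def)
qed

lemma inverse_compatible_right_subst: "inverse_compatible right_subst"
  unfolding inverse_compatible_def
proof
  fix a :: letter
  show "right_subst (inv_letter a) = fg_inv (right_subst a)"
    by (cases a rule: right_subst.cases) (simp_all add: inv_letter_def fg_inv_def)
qed

lemma subst_right_subst: "subst right_subst w = rev (map swap_xz (subst left_subst (rev (map swap_xz w))))"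
proof (induction w)
  case (Cons a w)
  have "right_subst a = rev (map swap_xz (left_subst (swap_xz a)))"
    by (cases a rule: right_subst.cases) simp_all
  with Cons show ?case
    by (simp add: subst_def)
qed simp

context coprime_pair
begin

lemma row_last: "row (p + q - 1) = p - 1"
  unfolding row_def int_div_eq_iff[OF sum_pos] using p_pos q_pos by (simp add: algebra_simps)

lemma right_of_Ver_row:
  assumes "0 < k" and "k < p + q"
  shows "right_of p (p + q) (Ver k (row k)) \<longleftrightarrow> right_of p q (diag_edge k)"
proof -
  have "diag_edge k = Dia (k - 1 - row k) (row k)"
    using col_add_row[OF assms] by (simp add: diag_edge_def eq_diff_eq)
  then show ?thesis
    by (simp add: algebra_simps)
qed

lemma right_of_row_step:
  assumes "0 < k" and "k + 1 < p + q" and step: "row (k + 1) = row k + 1"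
  shows "right_of p (p + q) (Dia k (row k))"
    and "\<not> right_of p (p + q) (Dia k (row (k + 1)))"
    and "right_of p (p + q) (Hor k (row (k + 1))) \<longleftrightarrow> right_of p q (mid_edge k)"
proof -
  have bounds: "row k * (p + q) < k * p" "k * p < (row k + 1) * (p + q)"
      "(row k + 1) * (p + q) < (k + 1) * p" "(k + 1) * p < (row k + 2) * (p + q)"
    using row_less[of k] row_bounds(2)[of k] row_less[of "k + 1"] row_bounds(2)[of "k + 1"] step assms
    by (simp_all add: add.assoc)
  then show "right_of p (p + q) (Dia k (row k))" "\<not> right_of p (p + q) (Dia k (row (k + 1)))"
    using step by (simp_all add: algebra_simps)
  have "mid_edge k = Hor (k - row (k + 1)) (row (k + 1))"
    using col_row_step[OF assms(1,2)] col_add_row[of "k + 1"] step assms by (auto simp: mid_edge_def)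
  then show "right_of p (p + q) (Hor k (row (k + 1))) \<longleftrightarrow> right_of p q (mid_edge k)"
    by (simp add: algebra_simps)
qed

lemma right_of_no_row_step:
  assumes "0 < k" and "k + 1 < p + q" and "row (k + 1) \<noteq> row k + 1"
  shows "right_of p (p + q) (Dia k (row k)) \<longleftrightarrow> right_of p q (mid_edge k)"
proof -
  have "mid_edge k = Ver (k - row k) (row k)"
    using col_row_step[OF assms(1,2)] col_add_row[of "k + 1"] assms by (auto simp: mid_edge_def)
  then show ?thesis
    by (simp add: algebra_simps)
qed

lemma left_subst_diag_block:
  assumes "0 < k" and "k + 1 < p + q"
  shows "reduce (subst left_subst (map (edge_letter p q) (diag_block k)))
    = reduce (gy @ map (edge_letter p (p + q)) (col_block k) @ fg_inv gy)"
  \<comment> \<open>With \<open>s\<close>, \<open>t\<close> the exponents of the diagonal and the middle edge: if the row index steps,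
    both sides are \<open>y z\<^sup>s y\<inverse> x\<^sup>t\<close> up to a trailing \<open>y y\<inverse>\<close>; otherwise they are
    \<open>y z\<^sup>s y\<inverse> y\<^sup>t\<close> and \<open>y z\<^sup>s y\<^sup>t y\<inverse>\<close>.\<close>
proof (cases "row (k + 1) = row k + 1")
  case True
  then have "col (k + 1) \<noteq> col k + 1"
    using col_row_step[OF assms] by auto
  then show ?thesis
    using True assms right_of_row_step[OF assms True] right_of_Ver_row[of k]
      reduce_cancel_pair[of "[(GY, False), (GZ, right_of p q (diag_edge k)), (GY, True),
        (GX, right_of p q (mid_edge k))]" "(GY, False)" "[]"]
    by (simp add: diag_block_def col_block_def edge_letter_eq mid_edge_def diag_edge_def fg_inv_def inv_letter_def)
next
  case False
  then have "col (k + 1) = col k + 1"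
    using col_row_step[OF assms] by auto
  then show ?thesis
    using False assms right_of_no_row_step[OF assms False] right_of_Ver_row[of k]
    by (cases "right_of p q (mid_edge k)")
      (simp_all add: diag_block_def col_block_def edge_letter_eq mid_edge_def diag_edge_def fg_inv_def
        inv_letter_def reduce_Cons red_cons_def)
qed

lemma left_subst_last_diag_block:
  "subst left_subst (map (edge_letter p q) (diag_block (p + q - 1)))
    = gy @ map (edge_letter p (p + q)) (col_block (p + q - 1))"
proof -
  have last: "0 < p + q - 1" "p + q - 1 < p + q"
    using p_pos q_pos by simp_all
  have "right_of p (p + q) (Dia (p + q - 1) (row (p + q - 1)))"
    using p_pos q_pos by (simp add: row_last algebra_simps)
  then show ?thesis
    using right_of_Ver_row[OF last]
    by (simp add: diag_block_def col_block_def edge_letter_eq diag_edge_def)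
qed

lemma omega_word_diag_blocks:
  "omega_word p q = concat (map (\<lambda>k. map (edge_letter p q) (diag_block k)) [1..p + q - 2])
    @ map (edge_letter p q) (diag_block (p + q - 1))"
proof -
  have "[1..p + q - 1] = [1..p + q - 2] @ [p + q - 1]"
    using p_pos q_pos upto_rec2[of 1 "p + q - 1"] by simp
  then show ?thesis
    by (simp add: omega_word_def crossing_list_eq_diag_list diag_list_def map_concat comp_def)
qed

lemma omega_word_col_blocks:
  "omega_word p (p + q) = gy @ concat (map (\<lambda>k. map (edge_letter p (p + q)) (col_block k)) [1..p + q - 2])
    @ map (edge_letter p (p + q)) (col_block (p + q - 1))"
proof -
  have "[1..p + q - 1] = [1..p + q - 2] @ [p + q - 1]"
    using p_pos q_pos upto_rec2[of 1 "p + q - 1"] by simp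
  moreover have "edge_letter p (p + q) (Dia 0 0) = (GY, False)"
    using q_pos by (simp add: edge_letter_eq)
  ultimately show ?thesis
    by (simp add: omega_word_def crossing_list_eq_col_list col_list_def map_concat comp_def)
qed

theorem omega_word_left: "reduce (omega_word p (p + q)) = reduce (subst left_subst (omega_word p q))"
proof -
  let ?D = "\<lambda>k. map (edge_letter p q) (diag_block k)"
    and ?T = "\<lambda>k. map (edge_letter p (p + q)) (col_block k)"
    and ?ks = "[1..p + q - 2]"
  have "reduce (concat (map (\<lambda>k. subst left_subst (?D k)) ?ks))
      = reduce (concat (map (\<lambda>k. gy @ ?T k @ fg_inv gy) ?ks))"
    by (rule reduce_concat_cong) (simp add: left_subst_diag_block)
  also have "\<dots> = reduce (gy @ concat (map ?T ?ks) @ fg_inv gy)"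
    by (rule reduce_concat_conj)
  finally have "reduce (concat (map (\<lambda>k. subst left_subst (?D k)) ?ks) @ subst left_subst (?D (p + q - 1)))
      = reduce ((gy @ concat (map ?T ?ks) @ fg_inv gy) @ gy @ ?T (p + q - 1))"
    unfolding left_subst_last_diag_block by (rule reduce_append_cong[OF _ refl])
  then have "reduce (subst left_subst (omega_word p q))
      = reduce ((gy @ concat (map ?T ?ks) @ fg_inv gy) @ gy @ ?T (p + q - 1))"
    unfolding omega_word_diag_blocks subst_simps(3) subst_concat map_map comp_def .
  also have "\<dots> = reduce ((gy @ concat (map ?T ?ks)) @ (GY, True) # inv_letter (GY, True) # ?T (p + q - 1))"
    by (simp add: fg_inv_def inv_letter_def)
  also have "\<dots> = reduce (omega_word p (p + q))"
    unfolding reduce_cancel_pair omega_word_col_blocks by simp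
  finally show ?thesis ..
qed

end

context coprime_pair
begin

theorem omega_word_right: "reduce (omega_word (p + q) q) = reduce (subst right_subst (omega_word p q))"
proof -
  interpret right_pair: coprime_pair q "p + q"
    using p_pos q_pos swap.coprime_sum by unfold_locales (simp_all add: add.commute)
  have "reduce (omega_word (p + q) q) = reduce (rev (map swap_xz (omega_word q (q + p))))"
    using right_pair.omega_word_swap by (simp add: add.commute)
  also have "\<dots> = rev (map swap_xz (reduce (subst left_subst (omega_word q p))))"
    using swap.omega_word_left by (simp add: reduce_rev reduce_map inj_swap_xz swap_xz_inv_letter)
  also have "\<dots> = reduce (subst right_subst (omega_word p q))"
    by (simp add: omega_word_swap subst_right_subst reduce_rev reduce_map inj_swap_xz swap_xz_inv_letter)
  finally show ?thesis .
qed

end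

section \<open>The Farey tree and the word tree\<close>

fun farey_map :: "bool \<Rightarrow> frac \<Rightarrow> frac" where
  "farey_map False (a, b) = (a, a + b)"
| "farey_map True (a, b) = (a + b, b)"

definition child_subst :: "bool \<Rightarrow> letter \<Rightarrow> word" where
  "child_subst d = (if d then right_subst else left_subst)"

text \<open>The first step of a path acts last: the subtree below the child \<open>d\<close> of the root is the image
  of the whole tree under \<open>farey_map d\<close>.\<close>
definition farey_path_map :: "bool list \<Rightarrow> frac \<Rightarrow> frac" where
  "farey_path_map path = foldr farey_map path"

definition path_subst :: "bool list \<Rightarrow> word \<Rightarrow> word" where
  "path_subst path = foldr (\<lambda>d. subst (child_subst d)) path"

lemma farey_map_mediant: "farey_map d (mediant u v) = mediant (farey_map d u) (farey_map d v)"
  by (cases u; cases v; cases d) (simp_all add: mediant_def)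

lemma farey_path_map_mediant:
  "farey_path_map path (mediant u v) = mediant (farey_path_map path u) (farey_path_map path v)"
  unfolding farey_path_map_def by (induction path) (simp_all add: farey_map_mediant)

lemma coprime_farey_path_map:
  "coprime (fst v) (snd v) \<Longrightarrow> coprime (fst (farey_path_map path v)) (snd (farey_path_map path v))"
proof (induction path)
  case (Cons d path)
  then show ?case
    by (cases "farey_path_map path v"; cases d) (simp_all add: farey_path_map_def coprime_iff_gcd_eq_1)
qed (simp add: farey_path_map_def)

lemma farey_vertex_eq:
  "farey_vertex path = (farey_path_map path (0, 1), farey_path_map path (1, 1), farey_path_map path (1, 0))"
proof (induction path rule: rev_induct)
  case (snoc d path)
  have "mediant (0, 1) (1, 1) = ((1::nat), (2::nat))" "mediant (1, 1) (1, 0) = ((2::nat), (1::nat))"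
    by (simp_all add: mediant_def)
  then have "mediant (farey_path_map path (0, 1)) (farey_path_map path (1, 1)) = farey_path_map path (1, 2)"
    "mediant (farey_path_map path (1, 1)) (farey_path_map path (1, 0)) = farey_path_map path (2, 1)"
    by (simp_all flip: farey_path_map_mediant)
  with snoc show ?case
    by (cases d) (simp_all add: farey_vertex_def farey_child_def farey_path_map_def numeral_2_eq_2)
qed (simp add: farey_vertex_def farey_root_def farey_path_map_def)

lemma inverse_compatible_child_subst: "inverse_compatible (child_subst d)"
  by (simp add: child_subst_def inverse_compatible_left_subst inverse_compatible_right_subst)

lemma path_subst_append: "path_subst path (u @ v) = path_subst path u @ path_subst path v"
  unfolding path_subst_def by (induction path) simp_all

lemma path_subst_fg_inv: "path_subst path (fg_inv w) = fg_inv (path_subst path w)"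
  unfolding path_subst_def
  by (induction path) (simp_all add: subst_fg_inv inverse_compatible_child_subst)

lemma path_subst_snoc: "path_subst (path @ [d]) w = path_subst path (subst (child_subst d) w)"
  by (simp add: path_subst_def)

lemma word_vertex_eq:
  "word_vertex path = (reduce (path_subst path gx), reduce (path_subst path gy), reduce (path_subst path gz))"
proof (induction path rule: rev_induct)
  case (snoc d path)
  let ?x = "path_subst path gx" and ?y = "path_subst path gy" and ?z = "path_subst path gz"
  have right: "subst (child_subst True) gy = fg_inv gy @ gx @ gy"
    and left: "subst (child_subst False) gy = gy @ gz @ fg_inv gy"
    by (simp_all add: child_subst_def fg_inv_def inv_letter_def)
  have "path_subst (path @ [True]) gy = fg_inv ?y @ ?x @ ?y"
    "path_subst (path @ [False]) gy = ?y @ ?z @ fg_inv ?y"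
    by (simp_all only: path_subst_snoc right left path_subst_append path_subst_fg_inv)
  with snoc show ?case
    by (cases d) (simp_all add: word_vertex_def word_child_def path_subst_snoc child_subst_def
      fg_mult_reduce reduce_fg_inv[symmetric])
qed (simp add: word_vertex_def word_root_def path_subst_def reduce_Cons red_cons_def)

lemma omega_frac_eq_omega_word:
  assumes "0 < a" and "0 < b" and "coprime a b"
  shows "omega_frac (a, b) = omega_word (int a) (int b)"
proof -
  have "quotient_of (Fract (int a) (int b)) = (int a, int b)"
    using assms by (simp add: quotient_of_Fract)
  with assms show ?thesis
    by (simp add: omega_frac_def omega_rat_def omega_word_def)
qed

lemma omega_frac_zero_one [simp]: "omega_frac (0, Suc 0) = gx"
  by (simp add: omega_frac_def)

lemma omega_frac_one_zero [simp]: "omega_frac (Suc 0, 0) = gz"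
  by (simp add: omega_frac_def)

lemma omega_frac_one_one [simp]: "omega_frac (Suc 0, Suc 0) = gy"
proof -
  interpret coprime_pair 1 1
    by unfold_locales simp_all
  have "diag_list = [Dia 0 0]"
    by (simp add: diag_list_def diag_block_def diag_edge_def col_def row_def)
  then show ?thesis
    using omega_frac_eq_omega_word[of 1 1]
    by (simp add: omega_word_def crossing_list_eq_diag_list edge_letter_eq)
qed

lemma reduce_omega_frac_farey_map:
  assumes "coprime a b"
  shows "reduce (omega_frac (farey_map d (a, b))) = reduce (subst (child_subst d) (omega_frac (a, b)))"
proof (cases "a = 0 \<or> b = 0")
  case True
  then have "(a, b) = (0, 1) \<or> (a, b) = (1, 0)"
    using assms by auto
  then show ?thesis
    by (cases d) (auto simp: child_subst_def reduce_Cons red_cons_def)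
next
  case False
  then interpret coprime_pair "int a" "int b"
    using assms by unfold_locales simp_all
  have "coprime a (a + b)" "coprime (a + b) b"
    using assms by (simp_all add: coprime_iff_gcd_eq_1)
  with False assms show ?thesis
    using omega_word_left omega_word_right
    by (cases d) (simp_all add: omega_frac_eq_omega_word child_subst_def)
qed

lemma reduce_omega_frac_farey_path_map:
  assumes "coprime (fst v) (snd v)"
  shows "reduce (omega_frac (farey_path_map path v)) = reduce (path_subst path (omega_frac v))"
proof (induction path)
  case (Cons d path)
  obtain a b where ab: "farey_path_map path v = (a, b)"
    by fastforce
  then have "coprime a b"
    using coprime_farey_path_map[OF assms, of path] by simp
  then have "reduce (omega_frac (farey_path_map (d # path) v))
      = reduce (subst (child_subst d) (reduce (omega_frac (farey_path_map path v))))"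
    using ab reduce_omega_frac_farey_map reduce_subst_reduce[OF inverse_compatible_child_subst]
    by (simp add: farey_path_map_def)
  also have "\<dots> = reduce (path_subst (d # path) (omega_frac v))"
    using Cons.IH reduce_subst_reduce[OF inverse_compatible_child_subst] by (simp add: path_subst_def)
  finally show ?case .
qed (simp add: farey_path_map_def path_subst_def)

lemma Phi_farey_vertex: "Phi (farey_vertex path) = word_vertex path"
  using reduce_omega_frac_farey_path_map[of "(0, 1)" path] reduce_omega_frac_farey_path_map[of "(1, 1)" path]
    reduce_omega_frac_farey_path_map[of "(1, 0)" path]
  by (simp add: farey_vertex_eq word_vertex_eq Phi_def)

theorem theorem3p6:
  shows "Phi farey_root = word_root
     \<and> (\<forall>path d. Phi (farey_child (farey_vertex path) d) = word_child (Phi (farey_vertex path)) d)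
     \<and> (\<forall>path. Phi (farey_vertex path) = word_vertex path)"
proof (intro conjI allI)
  show "Phi farey_root = word_root"
    using Phi_farey_vertex[of "[]"] by (simp add: farey_vertex_def word_vertex_def)
  show "Phi (farey_child (farey_vertex path) d) = word_child (Phi (farey_vertex path)) d" for path d
  proof -
    have "farey_child (farey_vertex path) d = farey_vertex (path @ [d])"
      "word_child (word_vertex path) d = word_vertex (path @ [d])"
      by (simp_all add: farey_vertex_def word_vertex_def)
    then show ?thesis
      by (simp add: Phi_farey_vertex)
  qed
  show "Phi (farey_vertex path) = word_vertex path" for path
    by (rule Phi_farey_vertex)
qed

end
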